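(* Let $a\ge 2$ be even and let $c$ be an integer with $0<c<\frac a2$. Then $U=\{(a,-a),(c,-c),(0,0)\}\subseteq\mathcal{B}$ is unavoidable.
   Context: The bicyclic inverse semigroup is $\mathcal{B}=\{(a,b)\in\mathbb{Z}\times\mathbb{Z}\mid a\ge 0,\ a+b\ge 0\}$ with multiplication $(a,b)(c,d)=(\max\{c+d,a\}-d,\ b+d)$. A subset $U\subseteq\mathcal{B}$ is called avoidable if $\mathcal{B}$ can be partitioned into two subsets $A$ and $B$ such that no element of $U$ can be written as a product $xy$ of two distinct elements $x\neq y$ both in $A$, or both in $B$. A set is unavoidable if it is not avoidable. *)

theory Defs
  imports Main
begin

definition bicyclic :: "(int \<times> int) set" where
  "bicyclic = {(a, b). a \<ge> 0 \<and> a + b \<ge> 0}"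

fun bmult :: "int \<times> int \<Rightarrow> int \<times> int \<Rightarrow> int \<times> int" where
  "bmult (a, b) (c, d) = (max (c + d) a - d, b + d)"

definition avoidable :: "(int \<times> int) set \<Rightarrow> bool" where
  "avoidable U \<longleftrightarrow> (\<exists>A B. A \<union> B = bicyclic \<and> A \<inter> B = {} \<and>
     (\<forall>x\<in>A. \<forall>y\<in>A. x \<noteq> y \<longrightarrow> bmult x y \<notin> U) \<and>
     (\<forall>x\<in>B. \<forall>y\<in>B. x \<noteq> y \<longrightarrow> bmult x y \<notin> U))"

definition unavoidable :: "(int \<times> int) set \<Rightarrow> bool" where
  "unavoidable U \<longleftrightarrow> \<not> avoidable U"

end

theory Submission
  imports Defs
begin

text \<open>A partition witnessing avoidability of \<open>U\<close> must put any two distinct \<open>x, y \<in> \<B>\<close> with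
  \<open>xy \<in> U\<close> or \<open>yx \<in> U\<close> into different parts: it is a proper 2-colouring of this conflict
  graph. So an odd closed walk in the conflict graph makes \<open>U\<close> unavoidable. For the given \<open>U\<close>
  such a walk is the 5-cycle \<open>(a,-a), (0,0), (c,-c), (a-c,c-a), (0,a-c)\<close>: the products
  \<open>(a,-a)(0,0)\<close>, \<open>(c,-c)(0,0)\<close>, \<open>(c,-c)(a-c,c-a)\<close>, \<open>(a-c,c-a)(0,a-c)\<close>, \<open>(a,-a)(0,a-c)\<close> all lie
  in \<open>U\<close>. The vertices are distinct since \<open>0 < c\<close> and \<open>2c \<noteq> a\<close>.\<close>

definition conflict :: "(int \<times> int) set \<Rightarrow> int \<times> int \<Rightarrow> int \<times> int \<Rightarrow> bool" where
  "conflict U x y \<longleftrightarrow> x \<in> bicyclic \<and> y \<in> bicyclic \<and> x \<noteq> y \<and>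
     (bmult x y \<in> U \<or> bmult y x \<in> U)"

lemma avoiding_partition_separates_conflict:
  assumes "A \<union> B = bicyclic" "A \<inter> B = {}"
    and "\<forall>x\<in>A. \<forall>y\<in>A. x \<noteq> y \<longrightarrow> bmult x y \<notin> U"
    and "\<forall>x\<in>B. \<forall>y\<in>B. x \<noteq> y \<longrightarrow> bmult x y \<notin> U"
    and "conflict U x y"
  shows "x \<in> A \<longleftrightarrow> y \<notin> A"
proof -
  from \<open>conflict U x y\<close> have "x \<in> A \<union> B" "y \<in> A \<union> B" "x \<noteq> y"
    and product: "bmult x y \<in> U \<or> bmult y x \<in> U"
    unfolding conflict_def \<open>A \<union> B = bicyclic\<close> by simp_all
  have "\<not> (x \<in> A \<and> y \<in> A)"
    using assms(3) product \<open>x \<noteq> y\<close> by auto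
  moreover have "\<not> (x \<in> B \<and> y \<in> B)"
    using assms(4) product \<open>x \<noteq> y\<close> by auto
  ultimately show ?thesis
    using \<open>A \<inter> B = {}\<close> \<open>x \<in> A \<union> B\<close> \<open>y \<in> A \<union> B\<close> by blast
qed

lemma unavoidable_if_odd_closed_walk:
  fixes f :: "nat \<Rightarrow> int \<times> int"
  assumes "odd n" and "f n = f 0" and walk: "\<And>i. i < n \<Longrightarrow> conflict U (f i) (f (Suc i))"
  shows "unavoidable U"
  unfolding unavoidable_def avoidable_def
proof
  assume "\<exists>A B. A \<union> B = bicyclic \<and> A \<inter> B = {} \<and>
     (\<forall>x\<in>A. \<forall>y\<in>A. x \<noteq> y \<longrightarrow> bmult x y \<notin> U) \<and>
     (\<forall>x\<in>B. \<forall>y\<in>B. x \<noteq> y \<longrightarrow> bmult x y \<notin> U)"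
  then obtain A B where partition: "A \<union> B = bicyclic" "A \<inter> B = {}"
    "\<forall>x\<in>A. \<forall>y\<in>A. x \<noteq> y \<longrightarrow> bmult x y \<notin> U"
    "\<forall>x\<in>B. \<forall>y\<in>B. x \<noteq> y \<longrightarrow> bmult x y \<notin> U"
    by blast
  have alternates: "f i \<in> A \<longleftrightarrow> (f 0 \<in> A \<longleftrightarrow> even i)" if "i \<le> n" for i
    using that
  proof (induction i)
    case (Suc i)
    then have "f i \<in> A \<longleftrightarrow> f (Suc i) \<notin> A"
      using avoiding_partition_separates_conflict[OF partition walk] by simp
    with Suc show ?case by auto
  qed simp
  from alternates[of n] \<open>odd n\<close> \<open>f n = f 0\<close> show False by simp
qed

theorem proposition3p5:
  fixes a c :: int
  assumes "a \<ge> 2" and "even a" and "0 < c" and "2 * c < a"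
  shows "unavoidable {(a, -a), (c, -c), (0, 0)}"
proof -
  let ?U = "{(a, -a), (c, -c), (0, 0)}"
  define cycle where "cycle = [(a, -a), (0, 0), (c, -c), (a - c, c - a), (0, a - c), (a, -a)]"
  have walk: "conflict ?U (cycle ! i) (cycle ! Suc i)" if "i < 5" for i
  proof -
    from that consider "i = 0" | "i = 1" | "i = 2" | "i = 3" | "i = 4" by linarith
    then show ?thesis
      using assms by cases (simp_all add: cycle_def conflict_def bicyclic_def max_def)
  qed
  have "cycle ! 5 = cycle ! 0" by (simp add: cycle_def)
  then show ?thesis
    using unavoidable_if_odd_closed_walk[of 5 "(!) cycle"] walk by simp
qed

end
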